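(* Let $f:\mathbb{X}\to\mathbb{R}$ be a finite measurable function. If $\sup_{n\ge0}\big|\sum_{i=-n}^{n}f\circ T^i\big|<+\infty$ $\mu$-a.e. on a set of positive measure, then there exists a bounded measurable function $g:\mathbb{X}\to\mathbb{R}$ such that $f=g-g\circ T$ $\mu$-a.e.
   Context: Standing assumptions: $(\mathbb{X},\mathcal{X},\mu,T)$ is a probability space with $T$ an invertible, bi-measurable, measure-preserving, ergodic transformation. *)

theory Defs
  imports "HOL-Probability.Probability"
begin

definition invertible_bimeasurable :: "'a measure \<Rightarrow> ('a \<Rightarrow> 'a) \<Rightarrow> bool" where
  "invertible_bimeasurable M T \<longleftrightarrow>
     bij_betw T (space M) (space M) \<and> T \<in> measurable M M \<and>
     the_inv_into (space M) T \<in> measurable M M"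

definition measure_preserving :: "'a measure \<Rightarrow> ('a \<Rightarrow> 'a) \<Rightarrow> bool" where
  "measure_preserving M T \<longleftrightarrow>
     T \<in> measurable M M \<and> (\<forall>A\<in>sets M. emeasure M (T -` A \<inter> space M) = emeasure M A)"

definition ergodic :: "'a measure \<Rightarrow> ('a \<Rightarrow> 'a) \<Rightarrow> bool" where
  "ergodic M T \<longleftrightarrow>
     (\<forall>A\<in>sets M. T -` A \<inter> space M = A \<longrightarrow> emeasure M A = 0 \<or> emeasure M A = emeasure M (space M))"

definition Tpow :: "'a measure \<Rightarrow> ('a \<Rightarrow> 'a) \<Rightarrow> int \<Rightarrow> 'a \<Rightarrow> 'a" where
  "Tpow M T i = (if 0 \<le> i then T ^^ nat i else (the_inv_into (space M) T) ^^ nat (- i))"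

end

theory Submission
  imports Defs
begin

text \<open>Let \<open>P x t\<close> be the Birkhoff sum of \<open>f\<close> along \<open>T\<^sup>0 x, \<dots>, T\<^sup>t\<^sup>-\<^sup>1 x\<close>, extended to
  \<open>t \<in> \<int>\<close> as a cocycle. A bound \<open>K\<close> on the symmetric sums at \<open>T\<^sup>k x\<close> says that \<open>t \<mapsto> P x t\<close>
  is \<open>K\<close>-almost symmetric about \<open>k + 1/2\<close>, and two such reflections compose to an
  almost-translation by \<open>2 (k - l)\<close>. Let \<open>B\<close> be a set of positive measure on which the
  symmetric sums are bounded by \<open>K\<close>. The preimages \<open>T\<^sup>-\<^sup>a B\<close> all have the measure of \<open>B\<close>,
  so a family of them with pairwise null intersections has at most \<open>1 / \<mu> B\<close> members; take
  a maximal one, indexed by \<open>F\<close>. Every \<open>T\<^sup>-\<^sup>t B\<close> then meets some \<open>T\<^sup>-\<^sup>a B\<close>, \<open>a \<in> F\<close>, in positive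
  measure, and by ergodicity almost every orbit visits \<open>B\<close> at two times \<open>k + t\<close>, \<open>k + a\<close>.
  Hence \<open>P x\<close> is bounded for almost every \<open>x\<close>. Its oscillation \<open>sup P x - inf P x\<close> is
  \<open>T\<close>-invariant, so by ergodicity it is bounded by a constant \<open>c\<close> almost everywhere, and
  \<open>g x = sup\<^sub>t P x t\<close> satisfies \<open>0 \<le> g \<le> c\<close> and \<open>g (T x) = g x - f x\<close>.\<close>

lemma funpow_closed: "(\<And>x. x \<in> A \<Longrightarrow> g x \<in> A) \<Longrightarrow> x \<in> A \<Longrightarrow> (g ^^ n) x \<in> A"
  by (induction n) auto

lemma measurable_funpow: "g \<in> measurable M M \<Longrightarrow> g ^^ n \<in> measurable M M"
  by (induction n) (simp_all add: measurable_comp)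

lemma emeasure_funpow_vimage:
  assumes g: "g \<in> measurable M M"
    and preserving: "\<And>A. A \<in> sets M \<Longrightarrow> emeasure M (g -` A \<inter> space M) = emeasure M A"
    and A: "A \<in> sets M"
  shows "emeasure M ((g ^^ n) -` A \<inter> space M) = emeasure M A"
  using A
proof (induction n arbitrary: A)
  case 0
  then show ?case using sets.sets_into_space by (simp add: Int_absorb2)
next
  case (Suc n)
  have "(g ^^ Suc n) -` A \<inter> space M = g -` ((g ^^ n) -` A \<inter> space M) \<inter> space M"
    using measurable_space[OF g] by (auto simp: funpow_swap1)
  also have "emeasure M \<dots> = emeasure M ((g ^^ n) -` A \<inter> space M)"
    using measurable_funpow[OF g] Suc.prems by (intro preserving measurable_sets)
  also have "\<dots> = emeasure M A"
    using Suc by simp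
  finally show ?case .
qed

lemma int_recurrence_unique:
  fixes u v d :: "int \<Rightarrow> real"
  assumes "\<And>t. u (t + 1) = u t + d t" "\<And>t. v (t + 1) = v t + d t" "u 0 = v 0"
  shows "u t = v t"
proof (induction t rule: int_induct[where k = 0])
  case (step2 i)
  then show ?case using assms(1,2)[of "i - 1"] by simp
qed (use assms in simp_all)

text \<open>The reflection \<open>s \<mapsto> 2 c + 1 - s\<close> is about the half-integer \<open>c + 1/2\<close>.\<close>
definition almost_symmetric_about :: "real \<Rightarrow> (int \<Rightarrow> real) \<Rightarrow> int \<Rightarrow> bool" where
  "almost_symmetric_about K p c \<longleftrightarrow> (\<forall>s. \<bar>p (2 * c + 1 - s) - p s\<bar> \<le> K)"

lemma almost_periodic_if_almost_symmetric:
  assumes "almost_symmetric_about K p k" "almost_symmetric_about K p l"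
  shows "\<bar>p (s + 2 * (k - l)) - p s\<bar> \<le> 2 * K"
proof -
  have "\<bar>p (2 * l + 1 - s) - p s\<bar> \<le> K"
    using assms(2) by (simp add: almost_symmetric_about_def)
  moreover have "\<bar>p (2 * k + 1 - (2 * l + 1 - s)) - p (2 * l + 1 - s)\<bar> \<le> K"
    using assms(1) unfolding almost_symmetric_about_def by blast
  moreover have "2 * k + 1 - (2 * l + 1 - s) = s + 2 * (k - l)"
    by simp
  ultimately show ?thesis by (simp add: abs_le_iff)
qed

text \<open>Two reflections compose to a translation, so \<open>p u\<close> is within \<open>2 K\<close> of
  \<open>p (2 a + u mod 2)\<close> for some \<open>a \<in> F\<close>.\<close>
lemma bounded_if_almost_symmetric_pairs:
  fixes p :: "int \<Rightarrow> real"
  assumes F: "finite F"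
    and pairs: "\<And>t. \<exists>a\<in>F. \<exists>k. almost_symmetric_about K p (k + t) \<and> almost_symmetric_about K p (k + a)"
  shows "\<exists>C. \<forall>u. \<bar>p u\<bar> \<le> C"
proof (intro exI allI)
  fix u :: int
  define r where "r = u mod 2"
  obtain a k where a: "a \<in> F" and k: "almost_symmetric_about K p (k + u div 2)"
    "almost_symmetric_about K p (k + a)"
    using pairs by blast
  have "(2 * a + r) + 2 * ((k + u div 2) - (k + a)) = u"
    by (simp add: r_def)
  then have "\<bar>p u - p (2 * a + r)\<bar> \<le> 2 * K"
    using almost_periodic_if_almost_symmetric[OF k, of "2 * a + r"] by simp
  moreover have "\<bar>p (2 * a + r)\<bar> \<le> \<bar>p (2 * a)\<bar> + \<bar>p (2 * a + 1)\<bar>"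
    using pos_mod_bound[of 2 u] pos_mod_sign[of 2 u] by (cases "r = 0") (auto simp: r_def)
  moreover have "\<bar>p (2 * a)\<bar> + \<bar>p (2 * a + 1)\<bar> \<le> (\<Sum>b\<in>F. \<bar>p (2 * b)\<bar> + \<bar>p (2 * b + 1)\<bar>)"
    by (rule member_le_sum[OF a _ F]) simp
  ultimately show "\<bar>p u\<bar> \<le> 2 * K + (\<Sum>b\<in>F. \<bar>p (2 * b)\<bar> + \<bar>p (2 * b + 1)\<bar>)"
    by linarith
qed

lemma exists_level_of_positive_measure:
  fixes Q :: "nat \<Rightarrow> 'a \<Rightarrow> bool"
  assumes Q: "\<And>n. {x \<in> space M. Q n x} \<in> sets M"
    and A: "A \<in> sets M" "emeasure M A > 0"
    and AE: "AE x in M. x \<in> A \<longrightarrow> (\<exists>n. Q n x)"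
  shows "\<exists>n. emeasure M {x \<in> space M. x \<in> A \<and> Q n x} > 0"
proof (rule ccontr)
  assume "\<not> ?thesis"
  then have "{x \<in> space M. x \<in> A \<and> Q n x} \<in> null_sets M" for n
    using Q A(1) by (auto intro!: null_setsI simp: zero_less_iff_neq_zero)
  then have "AE x in M. \<forall>n. x \<notin> {x \<in> space M. x \<in> A \<and> Q n x}"
    unfolding AE_all_countable by (blast intro: AE_not_in)
  with AE AE_space have "AE x in M. x \<notin> A"
    by eventually_elim auto
  then have "emeasure M A = 0"
    using AE_iff_measurable[OF A(1), of "\<lambda>x. x \<notin> A"] sets.sets_into_space[OF A(1)] by auto
  with A(2) show False by simp
qed

locale measure_automorphism =
  fixes M :: "'a measure" and T :: "'a \<Rightarrow> 'a"
  assumes invertible: "invertible_bimeasurable M T"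
    and preserving: "measure_preserving M T"
begin

abbreviation T_inv :: "'a \<Rightarrow> 'a" where
  "T_inv \<equiv> the_inv_into (space M) T"

lemma bij_T: "bij_betw T (space M) (space M)"
  using invertible by (simp add: invertible_bimeasurable_def)

lemma T_measurable[measurable]: "T \<in> measurable M M"
  using invertible by (simp add: invertible_bimeasurable_def)

lemma T_inv_measurable: "T_inv \<in> measurable M M"
  using invertible by (simp add: invertible_bimeasurable_def)

lemma T_space: "x \<in> space M \<Longrightarrow> T x \<in> space M"
  using bij_T by (meson bij_betwE)

lemma T_inv_space: "x \<in> space M \<Longrightarrow> T_inv x \<in> space M"
  using bij_T by (metis bij_betw_def the_inv_into_into subset_refl)

lemma T_T_inv: "x \<in> space M \<Longrightarrow> T (T_inv x) = x"
  using bij_T by (metis bij_betw_def f_the_inv_into_f)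

lemma T_inv_T: "x \<in> space M \<Longrightarrow> T_inv (T x) = x"
  using bij_T by (metis bij_betw_def the_inv_into_f_f)

lemma emeasure_T_vimage: "A \<in> sets M \<Longrightarrow> emeasure M (T -` A \<inter> space M) = emeasure M A"
  using preserving by (simp add: measure_preserving_def)

lemma emeasure_T_inv_vimage:
  assumes A: "A \<in> sets M"
  shows "emeasure M (T_inv -` A \<inter> space M) = emeasure M A"
proof -
  have "T -` (T_inv -` A \<inter> space M) \<inter> space M = A"
    using T_inv_T T_space sets.sets_into_space[OF A] by auto
  moreover have "T_inv -` A \<inter> space M \<in> sets M"
    using T_inv_measurable A by (rule measurable_sets)
  ultimately show ?thesis using emeasure_T_vimage by metis
qed

lemma Tpow_space: "x \<in> space M \<Longrightarrow> Tpow M T i x \<in> space M"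
  unfolding Tpow_def using funpow_closed[of "space M" T] funpow_closed[of "space M" T_inv]
  by (auto simp: T_space T_inv_space)

lemma Tpow_0[simp]: "Tpow M T 0 x = x"
  by (simp add: Tpow_def)

lemma Tpow_succ:
  assumes x: "x \<in> space M"
  shows "Tpow M T (i + 1) x = T (Tpow M T i x)"
proof (cases "0 \<le> i")
  case True
  then have "nat (i + 1) = Suc (nat i)" by simp
  with True show ?thesis by (simp add: Tpow_def)
next
  case False
  define m where "m = nat (- (i + 1))"
  have "nat (- i) = Suc m"
    using False by (simp add: m_def)
  then have "Tpow M T i x = T_inv ((T_inv ^^ m) x)" "Tpow M T (i + 1) x = (T_inv ^^ m) x"
    using False by (simp_all add: Tpow_def m_def)
  moreover have "(T_inv ^^ m) x \<in> space M"
    using funpow_closed[of "space M" T_inv] T_inv_space x by auto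
  ultimately show ?thesis using T_T_inv by simp
qed

lemma Tpow_1: "x \<in> space M \<Longrightarrow> Tpow M T 1 x = T x"
  using Tpow_succ[of x 0] by simp

lemma Tpow_pred: "x \<in> space M \<Longrightarrow> Tpow M T (i - 1) x = T_inv (Tpow M T i x)"
  using Tpow_succ[of x "i - 1"] T_inv_T Tpow_space by simp

lemma Tpow_add:
  assumes x: "x \<in> space M"
  shows "Tpow M T (i + j) x = Tpow M T i (Tpow M T j x)"
proof (induction i rule: int_induct[where k = 0])
  case (step1 i)
  have "Tpow M T (i + 1 + j) x = T (Tpow M T (i + j) x)"
    using Tpow_succ[OF x, of "i + j"] by (simp add: add.commute add.left_commute)
  then show ?case
    using step1 Tpow_succ[OF Tpow_space[OF x]] by simp
next
  case (step2 i)
  have "Tpow M T (i - 1 + j) x = T_inv (Tpow M T (i + j) x)"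
    using Tpow_pred[OF x, of "i + j"] by (simp add: algebra_simps)
  then show ?case
    using step2 Tpow_pred[OF Tpow_space[OF x]] by simp
qed simp

lemma Tpow_measurable[measurable]: "Tpow M T i \<in> measurable M M"
  unfolding Tpow_def using measurable_funpow T_measurable T_inv_measurable by simp

lemma emeasure_Tpow_vimage: "A \<in> sets M \<Longrightarrow> emeasure M (Tpow M T i -` A \<inter> space M) = emeasure M A"
  unfolding Tpow_def
  using emeasure_funpow_vimage[OF T_measurable emeasure_T_vimage]
    emeasure_funpow_vimage[OF T_inv_measurable emeasure_T_inv_vimage]
  by simp

definition birkhoff_sum :: "('a \<Rightarrow> real) \<Rightarrow> 'a \<Rightarrow> int \<Rightarrow> real" where
  "birkhoff_sum f x t = (\<Sum>i\<in>{0..<t}. f (Tpow M T i x)) - (\<Sum>i\<in>{t..<0}. f (Tpow M T i x))"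

lemma birkhoff_sum_0[simp]: "birkhoff_sum f x 0 = 0"
  by (simp add: birkhoff_sum_def)

lemma birkhoff_sum_succ: "birkhoff_sum f x (t + 1) = birkhoff_sum f x t + f (Tpow M T t x)"
proof (cases "0 \<le> t")
  case True
  then have "{0..<t + 1} = insert t {0..<t}" by auto
  with True show ?thesis by (simp add: birkhoff_sum_def)
next
  case False
  then have "{t..<0} = insert t {t + 1..<0}" by auto
  with False show ?thesis by (simp add: birkhoff_sum_def)
qed

lemma birkhoff_sum_uminus: "birkhoff_sum (\<lambda>y. - f y) x t = - birkhoff_sum f x t"
  by (simp add: birkhoff_sum_def sum_negf)

lemma sum_Tpow_eq_birkhoff_sum_diff:
  assumes "a \<le> b + 1"
  shows "(\<Sum>i\<in>{a..b}. f (Tpow M T i x)) = birkhoff_sum f x (b + 1) - birkhoff_sum f x a"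
proof -
  from assms have "a - 1 \<le> b" by simp
  then show ?thesis
  proof (induction b rule: int_ge_induct)
    case (step i)
    then have "{a..i + 1} = insert (i + 1) {a..i}" by auto
    with step show ?case using birkhoff_sum_succ[of f x "i + 1"] by simp
  qed simp
qed

lemma birkhoff_sum_Tpow:
  assumes x: "x \<in> space M"
  shows "birkhoff_sum f (Tpow M T k x) t = birkhoff_sum f x (t + k) - birkhoff_sum f x k"
proof (rule int_recurrence_unique[where u = "birkhoff_sum f (Tpow M T k x)"
      and v = "\<lambda>t. birkhoff_sum f x (t + k) - birkhoff_sum f x k" and d = "\<lambda>t. f (Tpow M T (t + k) x)"])
  fix t
  show "birkhoff_sum f (Tpow M T k x) (t + 1) = birkhoff_sum f (Tpow M T k x) t + f (Tpow M T (t + k) x)"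
    using birkhoff_sum_succ Tpow_add[OF x] by simp
  show "birkhoff_sum f x (t + 1 + k) - birkhoff_sum f x k
      = birkhoff_sum f x (t + k) - birkhoff_sum f x k + f (Tpow M T (t + k) x)"
    using birkhoff_sum_succ[of f x "t + k"] by (simp add: algebra_simps)
qed simp

lemma birkhoff_sum_T:
  assumes x: "x \<in> space M"
  shows "birkhoff_sum f (T x) t = birkhoff_sum f x (t + 1) - f x"
  using birkhoff_sum_Tpow[OF x, of f 1 t] birkhoff_sum_succ[of f x 0] Tpow_1[OF x] by simp

lemma birkhoff_sum_measurable[measurable]:
  assumes [measurable]: "f \<in> borel_measurable M"
  shows "(\<lambda>x. birkhoff_sum f x t) \<in> borel_measurable M"
  unfolding birkhoff_sum_def by measurable

definition symmetric_sums_bounded :: "('a \<Rightarrow> real) \<Rightarrow> real \<Rightarrow> 'a \<Rightarrow> bool" where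
  "symmetric_sums_bounded f K y \<longleftrightarrow> (\<forall>n::nat. \<bar>\<Sum>i\<in>{- int n..int n}. f (Tpow M T i y)\<bar> \<le> K)"

lemma symmetric_sums_bounded_sets[measurable]:
  assumes [measurable]: "f \<in> borel_measurable M"
  shows "{x \<in> space M. symmetric_sums_bounded f K x} \<in> sets M"
  unfolding symmetric_sums_bounded_def by measurable

lemma almost_symmetric_birkhoff_sum:
  assumes x: "x \<in> space M" and bounded: "symmetric_sums_bounded f K (Tpow M T k x)"
  shows "almost_symmetric_about K (birkhoff_sum f x) k"
proof -
  have around_k: "\<bar>birkhoff_sum f x (k + int n + 1) - birkhoff_sum f x (k - int n)\<bar> \<le> K" for n
  proof -
    have "(\<Sum>i\<in>{- int n..int n}. f (Tpow M T i (Tpow M T k x)))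
        = birkhoff_sum f x (k + int n + 1) - birkhoff_sum f x (k - int n)"
      using sum_Tpow_eq_birkhoff_sum_diff[of "- int n" "int n" f "Tpow M T k x"]
        birkhoff_sum_Tpow[OF x, of f k "int n + 1"] birkhoff_sum_Tpow[OF x, of f k "- int n"]
      by (simp add: algebra_simps)
    then show ?thesis using bounded unfolding symmetric_sums_bounded_def by metis
  qed
  show ?thesis
    unfolding almost_symmetric_about_def
  proof
    fix s
    show "\<bar>birkhoff_sum f x (2 * k + 1 - s) - birkhoff_sum f x s\<bar> \<le> K"
    proof (cases "s \<le> k")
      case True
      then show ?thesis using around_k[of "nat (k - s)"] by (simp add: algebra_simps)
    next
      case False
      then show ?thesis
        using around_k[of "nat (s - k - 1)"] by (simp add: algebra_simps abs_minus_commute)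
    qed
  qed
qed

definition birkhoff_sup :: "('a \<Rightarrow> real) \<Rightarrow> 'a \<Rightarrow> ereal" where
  "birkhoff_sup f x = (SUP t. ereal (birkhoff_sum f x t))"

lemma birkhoff_sup_measurable[measurable]:
  assumes [measurable]: "f \<in> borel_measurable M"
  shows "birkhoff_sup f \<in> borel_measurable M"
  unfolding birkhoff_sup_def by measurable

lemma birkhoff_sup_nonneg: "0 \<le> birkhoff_sup f x"
  unfolding birkhoff_sup_def by (rule SUP_upper2[of 0]) auto

lemma birkhoff_sup_T:
  assumes x: "x \<in> space M"
  shows "birkhoff_sup f (T x) = birkhoff_sup f x + ereal (- f x)"
proof -
  have shift: "range (\<lambda>t. ereal (birkhoff_sum f x (t + 1))) = range (\<lambda>t. ereal (birkhoff_sum f x t))"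
  proof -
    have "range (\<lambda>t::int. t + 1) = UNIV"
      by (metis UNIV_I diff_add_cancel image_eqI subsetI subset_antisym)
    then show ?thesis by (metis image_image)
  qed
  have "birkhoff_sup f (T x) = (SUP t. ereal (birkhoff_sum f x (t + 1)) + ereal (- f x))"
    unfolding birkhoff_sup_def using birkhoff_sum_T[OF x] by simp
  also have "\<dots> = (SUP t. ereal (birkhoff_sum f x (t + 1))) + ereal (- f x)"
    by (rule SUP_ereal_add_left) auto
  also have "(SUP t. ereal (birkhoff_sum f x (t + 1))) = birkhoff_sup f x"
    unfolding birkhoff_sup_def by (simp only: shift)
  finally show ?thesis .
qed

text \<open>\<open>birkhoff_sup f x + birkhoff_sup (- f) x\<close> is the oscillation \<open>sup - inf\<close> of
  \<open>birkhoff_sum f x\<close>, which does not change along orbits.\<close>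
definition bounded_oscillation_set :: "('a \<Rightarrow> real) \<Rightarrow> real \<Rightarrow> 'a set" where
  "bounded_oscillation_set f c =
     {x \<in> space M. birkhoff_sup f x + birkhoff_sup (\<lambda>y. - f y) x \<le> ereal c}"

lemma bounded_oscillation_set_sets[measurable]:
  assumes [measurable]: "f \<in> borel_measurable M"
  shows "bounded_oscillation_set f c \<in> sets M"
  unfolding bounded_oscillation_set_def by measurable

lemma birkhoff_oscillation_T:
  assumes x: "x \<in> space M"
  shows "birkhoff_sup f (T x) + birkhoff_sup (\<lambda>y. - f y) (T x)
       = birkhoff_sup f x + birkhoff_sup (\<lambda>y. - f y) x"
proof -
  have "birkhoff_sup f (T x) + birkhoff_sup (\<lambda>y. - f y) (T x)
      = (birkhoff_sup f x + birkhoff_sup (\<lambda>y. - f y) x) + (ereal (- f x) + ereal (f x))"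
    by (simp only: birkhoff_sup_T[OF x] minus_minus ac_simps)
  then show ?thesis by simp
qed

lemma birkhoff_sup_le_if_bounded_oscillation:
  assumes "x \<in> bounded_oscillation_set f c"
  shows "birkhoff_sup f x \<le> ereal c"
proof -
  have "birkhoff_sup f x \<le> birkhoff_sup f x + birkhoff_sup (\<lambda>y. - f y) x"
    using birkhoff_sup_nonneg by (rule add_increasing2) simp
  also have "\<dots> \<le> ereal c"
    using assms by (simp add: bounded_oscillation_set_def)
  finally show ?thesis .
qed

lemma vimage_T_bounded_oscillation_set:
  "T -` bounded_oscillation_set f c \<inter> space M = bounded_oscillation_set f c"
  unfolding bounded_oscillation_set_def using birkhoff_oscillation_T T_space by force

end

locale ergodic_automorphism = measure_automorphism + prob_space M +
  assumes ergodic: "ergodic M T"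
begin

lemma AE_in_invariant_set:
  assumes C: "C \<in> sets M" and invariant: "T -` C \<inter> space M = C" and pos: "emeasure M C > 0"
  shows "AE x in M. x \<in> C"
proof -
  have "emeasure M C = 0 \<or> emeasure M C = emeasure M (space M)"
    using ergodic C invariant unfolding ergodic_def by blast
  with pos have "prob C = 1"
    by (simp add: emeasure_eq_measure prob_space)
  then show ?thesis by (rule AE_prob_1)
qed

definition joint_visits :: "'a set \<Rightarrow> int \<Rightarrow> int \<Rightarrow> 'a set" where
  "joint_visits B a b = {x \<in> space M. Tpow M T a x \<in> B \<and> Tpow M T b x \<in> B}"

lemma joint_visits_sets[measurable]:
  assumes [measurable]: "B \<in> sets M"
  shows "joint_visits B a b \<in> sets M"
  unfolding joint_visits_def by measurable

lemma joint_visits_commute: "joint_visits B a b = joint_visits B b a"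
  unfolding joint_visits_def by auto

text \<open>The set of points visiting \<open>B\<close> at some pair of times \<open>k + a\<close>, \<open>k + b\<close> is invariant
  and contains \<open>joint_visits B a b\<close>.\<close>
lemma AE_joint_return:
  assumes B[measurable]: "B \<in> sets M"
  shows "AE x in M. \<forall>a b. emeasure M (joint_visits B a b) > 0 \<longrightarrow>
    (\<exists>k. Tpow M T (k + a) x \<in> B \<and> Tpow M T (k + b) x \<in> B)"
proof -
  have "AE x in M. x \<in> {x \<in> space M. \<exists>k. Tpow M T (k + a) x \<in> B \<and> Tpow M T (k + b) x \<in> B}"
    if pos: "emeasure M (joint_visits B a b) > 0" for a b
  proof (rule AE_in_invariant_set)
    define C where "C = {x \<in> space M. \<exists>k. Tpow M T (k + a) x \<in> B \<and> Tpow M T (k + b) x \<in> B}"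
    show "C \<in> sets M"
      unfolding C_def by measurable
    have shift: "Tpow M T (k + c) (T x) = Tpow M T (k + 1 + c) x" if "x \<in> space M" for x k c
      using Tpow_add[OF that, of "k + c" 1] Tpow_1[OF that] by (simp add: algebra_simps)
    show "T -` C \<inter> space M = C"
    proof (intro set_eqI iffI)
      fix x assume "x \<in> T -` C \<inter> space M"
      then show "x \<in> C" unfolding C_def using shift by auto
    next
      fix x assume "x \<in> C"
      then obtain k where x: "x \<in> space M" "Tpow M T (k + a) x \<in> B" "Tpow M T (k + b) x \<in> B"
        unfolding C_def by auto
      then have "Tpow M T (k - 1 + a) (T x) \<in> B \<and> Tpow M T (k - 1 + b) (T x) \<in> B"
        using shift[OF x(1), of "k - 1"] by simp
      then show "x \<in> T -` C \<inter> space M"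
        unfolding C_def using T_space[OF x(1)] x(1) by blast
    qed
    have "joint_visits B a b \<subseteq> C"
      unfolding joint_visits_def C_def by (auto intro: exI[of _ 0])
    with pos show "emeasure M C > 0"
      using emeasure_mono[of "joint_visits B a b" C M] \<open>C \<in> sets M\<close> by simp
  qed
  then show ?thesis
    by (simp add: AE_all_countable)
qed

definition essentially_disjoint_shifts :: "'a set \<Rightarrow> int set \<Rightarrow> bool" where
  "essentially_disjoint_shifts B F \<longleftrightarrow>
     (\<forall>a\<in>F. \<forall>b\<in>F. a \<noteq> b \<longrightarrow> emeasure M (joint_visits B a b) = 0)"

lemma card_essentially_disjoint_shifts_le:
  assumes B[measurable]: "B \<in> sets M" and F: "finite F"
    and disjoint: "essentially_disjoint_shifts B F"
  shows "real (card F) * measure M B \<le> 1"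
proof -
  define E where "E a = Tpow M T a -` B \<inter> space M" for a
  have E[measurable]: "E a \<in> sets M" for a
    unfolding E_def by measurable
  have "AE x in M. x \<notin> joint_visits B a b" if "a \<in> F" "b \<in> F" "a \<noteq> b" for a b
    using disjoint that by (intro AE_not_in null_setsI) (auto simp: essentially_disjoint_shifts_def)
  then have "AE x in M. \<forall>a\<in>F. \<forall>b\<in>F. a \<noteq> b \<longrightarrow> x \<notin> joint_visits B a b"
    using F by (simp add: AE_ball_countable countable_finite)
  then have "AE x in M. (\<Sum>a\<in>F. indicator (E a) x) \<le> (1::ennreal)"
  proof (rule AE_mp, intro AE_I2 impI)
    fix x assume x: "x \<in> space M" and "\<forall>a\<in>F. \<forall>b\<in>F. a \<noteq> b \<longrightarrow> x \<notin> joint_visits B a b"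
    then have "card {a \<in> F. x \<in> E a} \<le> Suc 0"
      using F by (subst card_le_Suc0_iff_eq) (auto simp: E_def joint_visits_def)
    moreover have "(\<Sum>a\<in>F. indicator (E a) x) = (of_nat (card {a \<in> F. x \<in> E a}) :: ennreal)"
      using F by (simp add: indicator_def sum.If_cases Int_def)
    ultimately show "(\<Sum>a\<in>F. indicator (E a) x) \<le> (1::ennreal)"
      by (metis One_nat_def of_nat_le_iff of_nat_1 ennreal_of_nat_eq_real_of_nat
          ennreal_1 ennreal_le_iff of_nat_0_le_iff)
  qed
  then have "(\<integral>\<^sup>+x. (\<Sum>a\<in>F. indicator (E a) x) \<partial>M) \<le> (\<integral>\<^sup>+x. 1 \<partial>M)"
    by (rule nn_integral_mono_AE)
  moreover have "(\<integral>\<^sup>+x. (\<Sum>a\<in>F. indicator (E a) x) \<partial>M) = ennreal (real (card F) * measure M B)"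
    using emeasure_Tpow_vimage[OF B]
    by (simp add: nn_integral_sum E_def emeasure_eq_measure ennreal_of_nat_eq_real_of_nat ennreal_mult')
  ultimately show ?thesis
    by (simp add: emeasure_space_1)
qed

text \<open>\<open>F\<close> is a family of essentially disjoint shifts of maximal cardinality.\<close>
lemma exists_finite_overlapping_shifts:
  assumes B[measurable]: "B \<in> sets M" and pos: "emeasure M B > 0"
  shows "\<exists>F. finite F \<and> (\<forall>t. \<exists>a\<in>F. emeasure M (joint_visits B t a) > 0)"
proof -
  have "card F < nat \<lceil>1 / measure M B\<rceil> + 1" if "finite F \<and> essentially_disjoint_shifts B F" for F
  proof -
    have "measure M B > 0"
      using pos by (simp add: emeasure_eq_measure)
    then have "real (card F) \<le> 1 / measure M B"
      using card_essentially_disjoint_shifts_le[OF B] that by (simp add: field_simps)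
    then show ?thesis by linarith
  qed
  moreover have "finite {} \<and> essentially_disjoint_shifts B {}"
    by (simp add: essentially_disjoint_shifts_def)
  ultimately obtain F where F: "finite F" "essentially_disjoint_shifts B F"
    and maximal: "\<And>F'. finite F' \<and> essentially_disjoint_shifts B F' \<Longrightarrow> card F' \<le> card F"
    using ex_has_greatest_nat[of "\<lambda>F. finite F \<and> essentially_disjoint_shifts B F" "{}" card] by blast
  have "\<exists>a\<in>F. emeasure M (joint_visits B t a) > 0" for t
  proof (cases "t \<in> F")
    case True
    have "joint_visits B t t = Tpow M T t -` B \<inter> space M"
      unfolding joint_visits_def by auto
    with True pos show ?thesis
      using emeasure_Tpow_vimage[OF B, of t] by (intro bexI[of _ t]) simp_all
  next
    case False
    then have "\<not> essentially_disjoint_shifts B (insert t F)"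
      using maximal[of "insert t F"] F by auto
    then show ?thesis
      using F(2) joint_visits_commute unfolding essentially_disjoint_shifts_def
      by (auto simp: zero_less_iff_neq_zero)
  qed
  with F(1) show ?thesis by blast
qed

lemma AE_birkhoff_sum_bounded:
  assumes f[measurable]: "f \<in> borel_measurable M"
    and A[measurable]: "A \<in> sets M" and pos: "emeasure M A > 0"
    and bounded: "AE x in M. x \<in> A \<longrightarrow>
      bdd_above (range (\<lambda>n::nat. \<bar>\<Sum>i\<in>{- int n..int n}. f (Tpow M T i x)\<bar>))"
  shows "AE x in M. \<exists>C. \<forall>t. \<bar>birkhoff_sum f x t\<bar> \<le> C"
proof -
  have "AE x in M. x \<in> A \<longrightarrow> (\<exists>K::nat. symmetric_sums_bounded f (real K) x)"
    using bounded
  proof eventually_elim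
    case (elim x)
    show ?case
    proof
      assume "x \<in> A"
      with elim obtain C where "\<And>n::nat. \<bar>\<Sum>i\<in>{- int n..int n}. f (Tpow M T i x)\<bar> \<le> C"
        by (auto simp: bdd_above_def)
      then have "symmetric_sums_bounded f (real (nat \<lceil>C\<rceil>)) x"
        unfolding symmetric_sums_bounded_def by (meson order.trans real_nat_ceiling_ge)
      then show "\<exists>K::nat. symmetric_sums_bounded f (real K) x" ..
    qed
  qed
  then obtain K :: nat
    where "emeasure M {x \<in> space M. x \<in> A \<and> symmetric_sums_bounded f (real K) x} > 0"
    using exists_level_of_positive_measure[OF symmetric_sums_bounded_sets[OF f] A pos] by blast
  moreover define B where "B = {x \<in> space M. x \<in> A \<and> symmetric_sums_bounded f (real K) x}"
  moreover have B[measurable]: "B \<in> sets M"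
    unfolding B_def by measurable
  ultimately obtain F where F: "finite F" and overlap: "\<And>t. \<exists>a\<in>F. emeasure M (joint_visits B t a) > 0"
    using exists_finite_overlapping_shifts by blast
  show ?thesis
    using AE_joint_return[OF B] AE_space
  proof eventually_elim
    case (elim x)
    have "\<exists>a\<in>F. \<exists>k. almost_symmetric_about (real K) (birkhoff_sum f x) (k + t)
                    \<and> almost_symmetric_about (real K) (birkhoff_sum f x) (k + a)" for t
    proof -
      obtain a where "a \<in> F" "emeasure M (joint_visits B t a) > 0"
        using overlap by blast
      with elim obtain k where "Tpow M T (k + t) x \<in> B" "Tpow M T (k + a) x \<in> B"
        by blast
      with \<open>a \<in> F\<close> elim show ?thesis
        unfolding B_def by (blast intro: almost_symmetric_birkhoff_sum)
    qed
    then show ?case by (rule bounded_if_almost_symmetric_pairs[OF F])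
  qed
qed

lemma coboundary_if_AE_birkhoff_sum_bounded:
  assumes f[measurable]: "f \<in> borel_measurable M"
    and bounded: "AE x in M. \<exists>C. \<forall>t. \<bar>birkhoff_sum f x t\<bar> \<le> C"
  shows "\<exists>g. g \<in> borel_measurable M \<and> (\<exists>C. \<forall>x\<in>space M. \<bar>g x\<bar> \<le> C) \<and>
    (AE x in M. f x = g x - g (T x))"
proof -
  have "AE x in M. x \<in> space M \<longrightarrow> (\<exists>c::nat. x \<in> bounded_oscillation_set f c)"
    using bounded
  proof eventually_elim
    case (elim x)
    then obtain C where C: "\<And>t. \<bar>birkhoff_sum f x t\<bar> \<le> C" by blast
    have "birkhoff_sup f x \<le> ereal C" "birkhoff_sup (\<lambda>y. - f y) x \<le> ereal C"
      unfolding birkhoff_sup_def birkhoff_sum_uminus using C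
      by (auto intro!: SUP_least simp: abs_le_iff)
    moreover have "ereal C + ereal C \<le> ereal (real (nat \<lceil>2 * C\<rceil>))"
      by simp linarith
    ultimately have "birkhoff_sup f x + birkhoff_sup (\<lambda>y. - f y) x \<le> ereal (real (nat \<lceil>2 * C\<rceil>))"
      by (meson add_mono order.trans)
    with elim show ?case
      unfolding bounded_oscillation_set_def by blast
  qed
  then have "\<exists>c::nat. emeasure M {x \<in> space M. x \<in> space M \<and> x \<in> bounded_oscillation_set f c} > 0"
    by (intro exists_level_of_positive_measure) (simp_all add: emeasure_space_1)
  moreover have "{x \<in> space M. x \<in> space M \<and> x \<in> bounded_oscillation_set f c} = bounded_oscillation_set f c"
    for c :: real
    by (auto simp: bounded_oscillation_set_def)
  ultimately obtain c :: nat where "emeasure M (bounded_oscillation_set f c) > 0"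
    by auto
  then have G: "AE x in M. x \<in> bounded_oscillation_set f c"
    by (intro AE_in_invariant_set vimage_T_bounded_oscillation_set) simp_all
  define g where "g x = (if x \<in> bounded_oscillation_set f c then real_of_ereal (birkhoff_sup f x) else 0)" for x
  have "g \<in> borel_measurable M"
    unfolding g_def by measurable
  moreover have "\<bar>g x\<bar> \<le> c" for x
    using birkhoff_sup_nonneg[of f x] birkhoff_sup_le_if_bounded_oscillation[of x f c]
    by (cases "birkhoff_sup f x") (auto simp: g_def)
  moreover have "AE x in M. f x = g x - g (T x)"
    using G
  proof eventually_elim
    case (elim x)
    then have "x \<in> space M" "T x \<in> bounded_oscillation_set f c"
      using vimage_T_bounded_oscillation_set[of f c] by (auto simp: bounded_oscillation_set_def)
    then show ?case
      using birkhoff_sup_T[of x f] birkhoff_sup_nonneg[of f x] birkhoff_sup_le_if_bounded_oscillation[OF elim]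
      by (cases "birkhoff_sup f x") (auto simp: g_def elim)
  qed
  ultimately show ?thesis by blast
qed

end

theorem proposition4:
  fixes M :: "'a measure" and T :: "'a \<Rightarrow> 'a" and f :: "'a \<Rightarrow> real"
  assumes "prob_space M"
    and "invertible_bimeasurable M T"
    and "measure_preserving M T"
    and "ergodic M T"
    and "f \<in> borel_measurable M"
    and "\<exists>A\<in>sets M. emeasure M A > 0 \<and>
           (AE x in M. x \<in> A \<longrightarrow>
              bdd_above (range (\<lambda>n::nat. \<bar>\<Sum>i\<in>{- int n..int n}. f (Tpow M T i x)\<bar>)))"
  shows "\<exists>g. g \<in> borel_measurable M \<and> (\<exists>C. \<forall>x\<in>space M. \<bar>g x\<bar> \<le> C) \<and>
             (AE x in M. f x = g x - g (T x))"
proof -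
  interpret ergodic_automorphism M T
    using assms(1-4) by (simp add: ergodic_automorphism_def ergodic_automorphism_axioms_def
        measure_automorphism_def)
  from assms(6) obtain A where "A \<in> sets M" "emeasure M A > 0"
    "AE x in M. x \<in> A \<longrightarrow> bdd_above (range (\<lambda>n::nat. \<bar>\<Sum>i\<in>{- int n..int n}. f (Tpow M T i x)\<bar>))"
    by blast
  with assms(5) show ?thesis
    by (intro coboundary_if_AE_birkhoff_sum_bounded AE_birkhoff_sum_bounded)
qed

end
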